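(* Let $F\subset\mathrm{Sym}^2(\mathbb{R}^n)$ be a cone subequation invariant under a subgroup of $\mathrm{O}(n)$ acting transitively on $S^{n-1}$, with Riesz characteristic $p$ ($1\le p<\infty$). Then $$F^{\min/2}_p\subset F\subset F^{\min/\max}_p,$$ where $F^{\min/\max}_p=\{A:\lambda_{\min}(A)+(p-1)\lambda_{\max}(A)\ge0\}$ and $F^{\min/2}_p=\{A:\lambda_{\min}(A)+(p-1)\lambda_2(A)\ge0\}$.
   Context: A cone subequation is a closed $F\subset\mathrm{Sym}^2(\mathbb{R}^n)$, $\emptyset\ne F\ne\mathrm{Sym}^2(\mathbb{R}^n)$, with $F+\{A\ge0\}\subset F$ and $tF\subset F$ for all $t\ge0$. Its Riesz characteristic is $p_F=\sup\{t:P_{e^\perp}-(t-1)P_e\in F\}$ for a (any) unit vector $e$, with $P_e,P_{e^\perp}$ the orthogonal projections onto $\mathbb{R}e$ and $e^\perp$. For $A\in\mathrm{Sym}^2(\mathbb{R}^n)$, $\lambda_1(A)\le\cdots\le\lambda_n(A)$ are its ordered eigenvalues, $\lambda_{\min}=\lambda_1$, $\lambda_{\max}=\lambda_n$. *)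

theory Defs
  imports "HOL-Analysis.Analysis" "HOL-Library.Multiset"
begin

type_synonym 'n sqmat = "real ^ 'n ^ 'n"

definition sym_mats :: "('n::finite) sqmat set" where
  "sym_mats = {A. transpose A = A}"

definition psd :: "('n::finite) sqmat \<Rightarrow> bool" where
  "psd A \<longleftrightarrow> transpose A = A \<and> (\<forall>x. 0 \<le> x \<bullet> (A *v x))"

definition cone_subequation :: "('n::finite) sqmat set \<Rightarrow> bool" where
  "cone_subequation F \<longleftrightarrow>
     F \<subseteq> sym_mats \<and> closed F \<and> F \<noteq> {} \<and> F \<noteq> sym_mats \<and>
     (\<forall>A\<in>F. \<forall>P. psd P \<longrightarrow> A + P \<in> F) \<and>
     (\<forall>A\<in>F. \<forall>t::real. t \<ge> 0 \<longrightarrow> t *\<^sub>R A \<in> F)"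

definition orthogonal_group :: "('n::finite) sqmat set" where
  "orthogonal_group = {g. orthogonal_matrix g}"

definition transitive_orth_subgroup :: "('n::finite) sqmat set \<Rightarrow> bool" where
  "transitive_orth_subgroup G \<longleftrightarrow>
     G \<subseteq> orthogonal_group \<and> mat 1 \<in> G \<and>
     (\<forall>g\<in>G. \<forall>h\<in>G. g ** h \<in> G) \<and> (\<forall>g\<in>G. transpose g \<in> G) \<and>
     (\<forall>x y. norm x = 1 \<longrightarrow> norm y = 1 \<longrightarrow> (\<exists>g\<in>G. g *v x = y))"

definition invariant_under :: "('n::finite) sqmat set \<Rightarrow> 'n sqmat set \<Rightarrow> bool" where
  "invariant_under G F \<longleftrightarrow> (\<forall>g\<in>G. \<forall>A\<in>F. g ** A ** transpose g \<in> F)"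

definition proj_line :: "real ^ ('n::finite) \<Rightarrow> 'n sqmat" where
  "proj_line e = (\<chi> i j. e $ i * e $ j)"

definition proj_perp :: "real ^ ('n::finite) \<Rightarrow> 'n sqmat" where
  "proj_perp e = mat 1 - proj_line e"

definition riesz_set :: "('n::finite) sqmat set \<Rightarrow> real ^ 'n \<Rightarrow> real set" where
  "riesz_set F e = {t. proj_perp e - (t - 1) *\<^sub>R proj_line e \<in> F}"

text \<open>Eigenvalues counted with (geometric = algebraic, for symmetric A) multiplicity,
  listed in increasing order; lam A k is the k-th one (1-based).\<close>
definition eigvals :: "('n::finite) sqmat \<Rightarrow> real set" where
  "eigvals A = {\<mu>. \<exists>x. x \<noteq> 0 \<and> A *v x = \<mu> *\<^sub>R x}"

definition eig_mult :: "('n::finite) sqmat \<Rightarrow> real \<Rightarrow> nat" where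
  "eig_mult A \<mu> = dim {x. A *v x = \<mu> *\<^sub>R x}"

definition eig_list :: "('n::finite) sqmat \<Rightarrow> real list" where
  "eig_list A = sorted_list_of_multiset
     (\<Sum>\<mu>\<in>eigvals A. replicate_mset (eig_mult A \<mu>) \<mu>)"

definition lam :: "('n::finite) sqmat \<Rightarrow> nat \<Rightarrow> real" where
  "lam A k = eig_list A ! (k - 1)"

definition lam_min :: "('n::finite) sqmat \<Rightarrow> real" where
  "lam_min A = lam A 1"

definition lam_max :: "('n::finite) sqmat \<Rightarrow> real" where
  "lam_max A = lam A CARD('n)"

definition F_min_max :: "real \<Rightarrow> ('n::finite) sqmat set" where
  "F_min_max p = {A\<in>sym_mats. lam_min A + (p - 1) * lam_max A \<ge> 0}"

definition F_min_2 :: "real \<Rightarrow> ('n::finite) sqmat set" where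
  "F_min_2 p = {A\<in>sym_mats. lam_min A + (p - 1) * lam A 2 \<ge> 0}"

end

theory Submission
  imports Defs
begin

text \<open>Write Q u t = P(u-perp) - (t - 1) P(u), whose quadratic form is |x|^2 - t (u.x)^2.
  Transitivity of G and invariance of F make the set of t with Q u t in F independent of the
  unit vector u, and closedness of F puts its supremum p in it. For symmetric A with a unit
  eigenvector e for lam_min A, the spectral theorem gives, with c = (e.x)^2 and s = |x|^2 - c,
    lam_min A c + lam A 2 s <= x.Ax <= lam_min A c + lam_max A s.
  If A is in F_min_2 p then lam A 2 >= 0 and the lower bound dominates lam A 2 Q e p, so A is
  in F by positivity. If A is in F and lam_max A > 0, the upper bound puts A / lam_max A below
  Q e t for t = 1 - lam_min A / lam_max A, so t <= p; if lam_max A <= 0 and lam_min A < 0, a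
  positive multiple of A lies below Q e (p + 1), which is impossible.\<close>

section \<open>Rayleigh quotients of symmetric matrices\<close>

lemma symmetric_matrix_inner_commute:
  fixes A :: "real^'n^'n"
  assumes "transpose A = A"
  shows "x \<bullet> (A *v y) = (A *v x) \<bullet> y"
  by (metis assms dot_lmul_matrix vector_transpose_matrix)

lemma quadratic_form_add_scaleR:
  fixes A :: "real^'n^'n"
  assumes "transpose A = A"
  shows "(v + t *\<^sub>R w) \<bullet> (A *v (v + t *\<^sub>R w))
    = v \<bullet> (A *v v) + 2 * t * (w \<bullet> (A *v v)) + t\<^sup>2 * (w \<bullet> (A *v w))"
proof -
  have "v \<bullet> (A *v w) = w \<bullet> (A *v v)"
    using symmetric_matrix_inner_commute[OF assms] by (simp add: inner_commute)
  then show ?thesis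
    by (simp add: power2_eq_square algebra_simps)
qed

lemma nonneg_quadratic_imp_linear_coeff_zero:
  fixes a b :: real
  assumes nonneg: "\<And>t. 0 \<le> b * t + a * t\<^sup>2" and a: "0 \<le> a"
  shows "b = 0"
proof (rule ccontr)
  assume "b \<noteq> 0"
  define t where "t = - b / (a + 1)"
  have t: "t * (a + 1) = - b"
    using a by (simp add: t_def)
  have "(a + 1)\<^sup>2 * (b * t + a * t\<^sup>2) = b * (a + 1) * (t * (a + 1)) + a * (t * (a + 1))\<^sup>2"
    by (simp add: power2_eq_square algebra_simps)
  also have "\<dots> = - b\<^sup>2"
    unfolding t by (simp add: power2_eq_square algebra_simps)
  finally have "(a + 1)\<^sup>2 * (b * t + a * t\<^sup>2) = - b\<^sup>2" .
  moreover have "0 \<le> (a + 1)\<^sup>2 * (b * t + a * t\<^sup>2)"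
    using nonneg by simp
  ultimately show False
    using \<open>b \<noteq> 0\<close> by simp
qed

text \<open>Along v + t w, with w the residual A v - m v, the excess of the quadratic form over
  m |v + t w|^2 is 2 t |w|^2 + O(t^2); it stays nonnegative for all t only if w = 0.\<close>
lemma rayleigh_min_imp_eigenvector:
  fixes A :: "real^'n^'n"
  assumes A: "transpose A = A" and W: "subspace W" and inv: "\<And>x. x \<in> W \<Longrightarrow> A *v x \<in> W"
    and v: "v \<in> W" and bound: "\<And>y. y \<in> W \<Longrightarrow> m * (y \<bullet> y) \<le> y \<bullet> (A *v y)"
    and attained: "v \<bullet> (A *v v) = m * (v \<bullet> v)"
  shows "A *v v = m *\<^sub>R v"
proof -
  define w where "w = A *v v - m *\<^sub>R v"
  define c where "c = w \<bullet> w"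
  define d where "d = w \<bullet> (A *v w) - m * c"
  have w: "w \<in> W"
    unfolding w_def using inv v W by (simp add: subspace_diff subspace_scale)
  have "0 \<le> (2 * c) * t + d * t\<^sup>2" for t
  proof -
    have "v + t *\<^sub>R w \<in> W"
      using v w W by (simp add: subspace_add subspace_scale)
    from bound[OF this]
    have "m * ((v + t *\<^sub>R w) \<bullet> (v + t *\<^sub>R w)) \<le> (v + t *\<^sub>R w) \<bullet> (A *v (v + t *\<^sub>R w))" .
    moreover have "(v + t *\<^sub>R w) \<bullet> (v + t *\<^sub>R w) = v \<bullet> v + 2 * t * (w \<bullet> v) + t\<^sup>2 * c"
      by (simp add: c_def power2_eq_square algebra_simps inner_commute)
    moreover have "(v + t *\<^sub>R w) \<bullet> (A *v (v + t *\<^sub>R w))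
        = m * (v \<bullet> v) + 2 * t * (c + m * (w \<bullet> v)) + t\<^sup>2 * (w \<bullet> (A *v w))"
      using quadratic_form_add_scaleR[OF A, of v t w] attained
      by (simp add: c_def w_def algebra_simps)
    moreover have "m * (P + 2 * t * a + t\<^sup>2 * c) \<le> m * P + 2 * t * (c + m * a) + t\<^sup>2 * b
        \<Longrightarrow> 0 \<le> (2 * c) * t + (b - m * c) * t\<^sup>2" for a b P :: real
      by (simp add: algebra_simps)
    ultimately show ?thesis
      by (simp add: d_def)
  qed
  moreover have "0 \<le> d"
    using bound[OF w] by (simp add: d_def c_def)
  ultimately have "2 * c = 0"
    by (rule nonneg_quadratic_imp_linear_coeff_zero)
  then show ?thesis
    by (simp add: c_def w_def)
qed

lemma rayleigh_min_eigenvector: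
  fixes A :: "real^'n^'n"
  assumes A: "transpose A = A" and W: "subspace W" "W \<noteq> {0}"
    and inv: "\<And>x. x \<in> W \<Longrightarrow> A *v x \<in> W"
  shows "\<exists>v m. v \<in> W \<and> norm v = 1 \<and> A *v v = m *\<^sub>R v \<and> (\<forall>y\<in>W. m * (y \<bullet> y) \<le> y \<bullet> (A *v y))"
proof -
  define K where "K = W \<inter> sphere 0 1"
  have "compact K"
    unfolding K_def by (metis closed_subspace compact_Int_closed compact_sphere inf_commute W(1))
  obtain x where "x \<in> W" "x \<noteq> 0"
    using W subspace_0 by blast
  then have "(1 / norm x) *\<^sub>R x \<in> K"
    unfolding K_def using W(1) by (simp add: subspace_scale)
  then have "K \<noteq> {}" by blast
  have "continuous_on K (\<lambda>x. x \<bullet> (A *v x))"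
    by (intro continuous_intros linear_continuous_on) auto
  then obtain v where v: "v \<in> K" and vmin: "\<And>y. y \<in> K \<Longrightarrow> v \<bullet> (A *v v) \<le> y \<bullet> (A *v y)"
    using continuous_attains_inf[OF \<open>compact K\<close> \<open>K \<noteq> {}\<close>] by blast
  define m where "m = v \<bullet> (A *v v)"
  have vW: "v \<in> W" and nv: "norm v = 1"
    using v by (auto simp: K_def)
  have bound: "m * (y \<bullet> y) \<le> y \<bullet> (A *v y)" if "y \<in> W" for y
  proof (cases "y = 0")
    case False
    have "(1 / norm y) *\<^sub>R y \<in> K"
      unfolding K_def using that False W(1) by (simp add: subspace_scale)
    then have "m \<le> ((1 / norm y) *\<^sub>R y) \<bullet> (A *v ((1 / norm y) *\<^sub>R y))"
      using vmin m_def by blast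
    also have "\<dots> = (y \<bullet> (A *v y)) / (norm y)\<^sup>2"
      by (simp add: matrix_vector_mult_scaleR power2_eq_square)
    finally have "m \<le> (y \<bullet> (A *v y)) / (norm y)\<^sup>2" .
    then show ?thesis
      using False by (simp add: field_simps power2_norm_eq_inner)
  qed simp
  have "v \<bullet> (A *v v) = m * (v \<bullet> v)"
    using nv by (simp add: m_def norm_eq_1)
  with rayleigh_min_imp_eigenvector[OF A W(1) inv vW bound] vW nv bound show ?thesis
    by blast
qed

lemma rayleigh_max_eigenvector:
  fixes A :: "real^'n^'n"
  assumes A: "transpose A = A" and W: "subspace W" "W \<noteq> {0}"
    and inv: "\<And>x. x \<in> W \<Longrightarrow> A *v x \<in> W"
  shows "\<exists>v M. v \<in> W \<and> norm v = 1 \<and> A *v v = M *\<^sub>R v \<and> (\<forall>y\<in>W. y \<bullet> (A *v y) \<le> M * (y \<bullet> y))"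
proof -
  have neg: "(- A) *v x = - (A *v x)" for x
    by (simp add: matrix_vector_mult_def vec_eq_iff sum_negf)
  have "transpose (- A) = - A"
    using A by (simp add: transpose_def vec_eq_iff)
  moreover have "(- A) *v x \<in> W" if "x \<in> W" for x
    using inv[OF that] W(1) by (simp add: neg subspace_neg)
  ultimately obtain v m where v: "v \<in> W" "norm v = 1" and "(- A) *v v = m *\<^sub>R v"
    and bound: "\<forall>y\<in>W. m * (y \<bullet> y) \<le> y \<bullet> ((- A) *v y)"
    using rayleigh_min_eigenvector[OF _ W] by blast
  then have "A *v v = (- m) *\<^sub>R v"
    by (metis neg minus_minus scaleR_minus_left)
  moreover have "y \<bullet> (A *v y) \<le> (- m) * (y \<bullet> y)" if "y \<in> W" for y
    using bound that by (force simp: neg)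
  ultimately show ?thesis
    using v by blast
qed

section \<open>The spectral theorem\<close>

lemma eigenvectors_orthogonal:
  fixes A :: "real^'n^'n"
  assumes "transpose A = A" "A *v x = \<mu> *\<^sub>R x" "A *v y = \<nu> *\<^sub>R y" "\<mu> \<noteq> \<nu>"
  shows "x \<bullet> y = 0"
proof -
  have "\<nu> * (x \<bullet> y) = (A *v x) \<bullet> y"
    using assms(3) symmetric_matrix_inner_commute[OF assms(1), of x y] by simp
  also have "\<dots> = \<mu> * (x \<bullet> y)"
    using assms(2) by simp
  finally show ?thesis
    using assms(4) by simp
qed

lemma eigvals_iff: "\<mu> \<in> eigvals A \<longleftrightarrow> (\<exists>x. x \<noteq> 0 \<and> A *v x = \<mu> *\<^sub>R x)"
  by (simp add: eigvals_def)

lemma finite_eigvals: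
  fixes A :: "real^'n^'n"
  assumes A: "transpose A = A"
  shows "finite (eigvals A)"
proof -
  define f where "f \<mu> = (SOME x. x \<noteq> 0 \<and> A *v x = \<mu> *\<^sub>R x)" for \<mu>
  have f: "f \<mu> \<noteq> 0 \<and> A *v f \<mu> = \<mu> *\<^sub>R f \<mu>" if "\<mu> \<in> eigvals A" for \<mu>
    unfolding f_def by (rule someI_ex) (use that in \<open>simp add: eigvals_iff\<close>)
  have "inj_on f (eigvals A)"
  proof (rule inj_onI)
    fix \<mu> \<nu> assume "\<mu> \<in> eigvals A" "\<nu> \<in> eigvals A" "f \<mu> = f \<nu>"
    then have "\<mu> *\<^sub>R f \<mu> = \<nu> *\<^sub>R f \<mu>" "f \<mu> \<noteq> 0"
      using f by metis+
    then show "\<mu> = \<nu>"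
      by (simp add: scaleR_cancel_right)
  qed
  moreover have "independent (f ` eigvals A)"
  proof (rule pairwise_orthogonal_independent)
    show "pairwise orthogonal (f ` eigvals A)"
      unfolding pairwise_def orthogonal_def
      using f eigenvectors_orthogonal[OF A] by (metis imageE)
    show "0 \<notin> f ` eigvals A"
      using f by auto
  qed
  ultimately show ?thesis
    using independent_bound finite_imageD by blast
qed

lemma card_le_eig_mult:
  fixes A :: "real^'n^'n"
  assumes "S \<subseteq> {x. A *v x = \<mu> *\<^sub>R x}" "pairwise orthogonal S" "0 \<notin> S"
  shows "card S \<le> eig_mult A \<mu>"
  unfolding eig_mult_def
  by (rule independent_card_le_dim[OF assms(1) pairwise_orthogonal_independent[OF assms(2,3)]])

lemma eig_mult_pos:
  fixes A :: "real^'n^'n"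
  assumes "\<mu> \<in> eigvals A"
  shows "0 < eig_mult A \<mu>"
proof -
  obtain x where "x \<noteq> 0" "A *v x = \<mu> *\<^sub>R x"
    using assms by (auto simp: eigvals_iff)
  then have "card {x} \<le> eig_mult A \<mu>"
    by (intro card_le_eig_mult) (auto simp: pairwise_def)
  then show ?thesis by simp
qed

lemma subspace_eigenvectors:
  fixes A :: "real^'n^'n"
  shows "subspace {x. A *v x = \<mu> *\<^sub>R x}"
  by (simp add: subspace_def matrix_vector_right_distrib matrix_vector_mult_scaleR algebra_simps)

text \<open>The eigenvectors of a symmetric matrix span: the orthogonal complement of their span is
  invariant, so a nonzero vector in it would yield an eigenvector orthogonal to itself.\<close>
lemma span_eigenvectors:
  fixes A :: "real^'n^'n"
  assumes A: "transpose A = A"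
  shows "span {x. \<exists>\<mu>. A *v x = \<mu> *\<^sub>R x} = UNIV"
proof -
  define E where "E = {x. \<exists>\<mu>. A *v x = \<mu> *\<^sub>R x}"
  define S where "S = span E"
  define W where "W = {y. \<forall>x\<in>S. orthogonal x y}"
  have invS: "A *v y \<in> S" if "y \<in> S" for y
    using that unfolding S_def E_def
  proof (induction rule: span_induct)
    case base
    show ?case
      by (simp add: subspace_def matrix_vector_right_distrib matrix_vector_mult_scaleR
          span_add span_scale span_zero)
  next
    case (step x)
    then obtain \<mu> where "A *v x = \<mu> *\<^sub>R x"
      by blast
    moreover have "x \<in> span {x. \<exists>\<mu>. A *v x = \<mu> *\<^sub>R x}"
      using step by (rule span_base)
    ultimately show ?case
      by (simp add: span_scale)
  qed
  have invW: "A *v y \<in> W" if "y \<in> W" for y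
    unfolding W_def
  proof (intro CollectI ballI)
    fix x assume "x \<in> S"
    then have "orthogonal (A *v x) y"
      using invS that unfolding W_def by blast
    then show "orthogonal x (A *v y)"
      by (simp add: orthogonal_def symmetric_matrix_inner_commute[OF A])
  qed
  have "subspace W"
    unfolding W_def by (rule subspace_orthogonal_to_vectors)
  have "W = {0}"
  proof (rule ccontr)
    assume "W \<noteq> {0}"
    then obtain v m where v: "v \<in> W" "norm v = 1" "A *v v = m *\<^sub>R v"
      using rayleigh_min_eigenvector[OF A \<open>subspace W\<close> _ invW] by blast
    then have "v \<in> S"
      unfolding S_def E_def by (blast intro: span_base)
    with v(1) have "v \<bullet> v = 0"
      unfolding W_def orthogonal_def by blast
    with v(2) show False
      by simp
  qed
  have "x \<in> S" for x
  proof -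
    obtain y z where "y \<in> span E" "\<And>w. w \<in> span E \<Longrightarrow> orthogonal z w" "x = y + z"
      using orthogonal_subspace_decomp_exists[of E x] by blast
    moreover from this have "z \<in> W"
      unfolding W_def S_def using orthogonal_commute by blast
    ultimately show ?thesis
      using \<open>W = {0}\<close> by (simp add: S_def)
  qed
  then show ?thesis
    unfolding S_def E_def by blast
qed

text \<open>Orthonormal bases of the summands combine to an orthonormal basis of the whole space.\<close>
lemma sum_dim_orthogonal_subspaces:
  fixes E :: "'i \<Rightarrow> 'a::euclidean_space set"
  assumes I: "finite I" and E: "\<And>i. i \<in> I \<Longrightarrow> subspace (E i)"
    and orth: "\<And>i j x y. i \<in> I \<Longrightarrow> j \<in> I \<Longrightarrow> i \<noteq> j \<Longrightarrow> x \<in> E i \<Longrightarrow> y \<in> E j \<Longrightarrow> orthogonal x y"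
    and spans: "span (\<Union>i\<in>I. E i) = UNIV"
  shows "(\<Sum>i\<in>I. dim (E i)) = DIM('a)"
proof -
  have "\<exists>B. B \<subseteq> E i \<and> pairwise orthogonal B \<and> (\<forall>x\<in>B. norm x = 1) \<and> independent B
      \<and> card B = dim (E i) \<and> span B = E i" if i: "i \<in> I" for i
  proof -
    obtain B where "B \<subseteq> E i" "pairwise orthogonal B" "\<And>x. x \<in> B \<Longrightarrow> norm x = 1"
      "independent B" "card B = dim (E i)" "span B = E i"
      using orthonormal_basis_subspace[OF E[OF i]] by blast
    then show ?thesis
      by blast
  qed
  then obtain B where B: "\<And>i. i \<in> I \<Longrightarrow> B i \<subseteq> E i \<and> pairwise orthogonal (B i)
      \<and> (\<forall>x\<in>B i. norm x = 1) \<and> independent (B i) \<and> card (B i) = dim (E i) \<and> span (B i) = E i"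
    by metis
  define U where "U = (\<Union>i\<in>I. B i)"
  have orth_B: "orthogonal x y" if "i \<in> I" "j \<in> I" "x \<in> B i" "y \<in> B j" "x \<noteq> y" for i j x y
  proof (cases "i = j")
    case True
    then show ?thesis
      using B[OF that(1)] that unfolding pairwise_def by blast
  next
    case False
    then show ?thesis
      using orth[OF that(1,2) False] B that(1-4) by blast
  qed
  have disjoint: "B i \<inter> B j = {}" if "i \<in> I" "j \<in> I" "i \<noteq> j" for i j
  proof (rule ccontr)
    assume "B i \<inter> B j \<noteq> {}"
    then obtain x where x: "x \<in> B i" "x \<in> B j" by blast
    then have "orthogonal x x"
      using orth[OF that] B that(1,2) by blast
    moreover have "norm x = 1"
      using B[OF that(1)] x(1) by blast
    ultimately show False
      by (simp add: orthogonal_def)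
  qed
  have "pairwise orthogonal U"
    unfolding pairwise_def U_def using orth_B by blast
  moreover have "0 \<notin> U"
    unfolding U_def using B by force
  ultimately have "independent U"
    by (rule pairwise_orthogonal_independent)
  have "finite (B i)" if "i \<in> I" for i
    using B[OF that] independent_bound by blast
  then have "card U = (\<Sum>i\<in>I. card (B i))"
    unfolding U_def using I disjoint by (intro card_UN_disjoint) auto
  also have "\<dots> = (\<Sum>i\<in>I. dim (E i))"
    using B by simp
  finally have card_U: "card U = (\<Sum>i\<in>I. dim (E i))" .
  have "E i \<subseteq> span U" if "i \<in> I" for i
    using B[OF that] span_mono[of "B i" U] that unfolding U_def by blast
  then have "span (\<Union>i\<in>I. E i) \<subseteq> span U"
    by (intro span_minimal subspace_span) blast
  then have "span U = UNIV"
    using spans by blast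
  then show ?thesis
    using dim_span_eq_card_independent[OF \<open>independent U\<close>] card_U by simp
qed

lemma sum_eig_mult:
  fixes A :: "real^'n^'n"
  assumes A: "transpose A = A"
  shows "(\<Sum>\<mu>\<in>eigvals A. eig_mult A \<mu>) = CARD('n)"
proof -
  define E where "E \<mu> = {x. A *v x = \<mu> *\<^sub>R x}" for \<mu>
  have "x \<in> span (\<Union>\<mu>\<in>eigvals A. E \<mu>)" if "A *v x = \<mu> *\<^sub>R x" for x \<mu>
  proof (cases "x = 0")
    case False
    with that have "\<mu> \<in> eigvals A"
      unfolding eigvals_iff by blast
    with that have "x \<in> (\<Union>\<mu>\<in>eigvals A. E \<mu>)"
      unfolding E_def by blast
    then show ?thesis
      by (rule span_base)
  qed (simp add: span_zero)
  then have "span {x. \<exists>\<mu>. A *v x = \<mu> *\<^sub>R x} \<subseteq> span (\<Union>\<mu>\<in>eigvals A. E \<mu>)"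
    by (intro span_minimal subspace_span) blast
  then have spans: "span (\<Union>\<mu>\<in>eigvals A. E \<mu>) = UNIV"
    unfolding span_eigenvectors[OF A] by blast
  have "(\<Sum>\<mu>\<in>eigvals A. dim (E \<mu>)) = DIM(real^'n)"
  proof (rule sum_dim_orthogonal_subspaces[OF finite_eigvals[OF A] _ _ spans])
    show "subspace (E \<mu>)" for \<mu>
      unfolding E_def by (rule subspace_eigenvectors)
    show "orthogonal x y" if "\<mu> \<noteq> \<nu>" "x \<in> E \<mu>" "y \<in> E \<nu>" for \<mu> \<nu> x y
      using eigenvectors_orthogonal[OF A _ _ that(1)] that(2,3) by (simp add: E_def orthogonal_def)
  qed
  then show ?thesis
    by (simp add: eig_mult_def E_def)
qed

section \<open>Ordered eigenvalues\<close>

lemma mset_eig_list: "mset (eig_list A) = (\<Sum>\<mu>\<in>eigvals A. replicate_mset (eig_mult A \<mu>) \<mu>)"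
  by (simp add: eig_list_def)

lemma sorted_eig_list: "sorted (eig_list A)"
  by (simp add: eig_list_def)

lemma length_eig_list:
  fixes A :: "real^'n^'n"
  assumes "transpose A = A"
  shows "length (eig_list A) = CARD('n)"
proof -
  have "length (eig_list A) = size (mset (eig_list A))"
    by simp
  also have "\<dots> = (\<Sum>\<mu>\<in>eigvals A. eig_mult A \<mu>)"
    by (simp add: mset_eig_list size_multiset_sum)
  finally show ?thesis
    using sum_eig_mult[OF assms] by simp
qed

lemma set_eig_list:
  fixes A :: "real^'n^'n"
  assumes "transpose A = A"
  shows "set (eig_list A) = eigvals A"
proof -
  have "set (eig_list A) = set_mset (mset (eig_list A))"
    by simp
  also have "\<dots> = eigvals A"
    using eig_mult_pos[of _ A] finite_eigvals[OF assms]
    by (auto simp: mset_eig_list set_mset_sum split: if_splits)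
  finally show ?thesis .
qed

lemma count_eig_list:
  fixes A :: "real^'n^'n"
  assumes "transpose A = A" "\<mu> \<in> eigvals A"
  shows "count (mset (eig_list A)) \<mu> = eig_mult A \<mu>"
  using assms by (simp add: mset_eig_list count_sum finite_eigvals)

lemma lam_min_eq:
  fixes A :: "real^'n^'n"
  assumes A: "transpose A = A" and a: "a \<in> eigvals A"
    and bound: "\<And>y. a * (y \<bullet> y) \<le> y \<bullet> (A *v y)"
  shows "lam_min A = a"
proof -
  define L where "L = eig_list A"
  have "L ! 0 \<in> eigvals A"
    using length_eig_list[OF A] set_eig_list[OF A] nth_mem[of 0 L] by (simp add: L_def)
  then obtain u where "u \<noteq> 0" "A *v u = L ! 0 *\<^sub>R u"
    by (auto simp: eigvals_iff)
  then have "a \<le> L ! 0"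
    using bound[of u] by simp
  moreover obtain j where "j < length L" "L ! j = a"
    using a set_eig_list[OF A] by (metis L_def in_set_conv_nth)
  then have "L ! 0 \<le> a"
    using sorted_eig_list sorted_nth_mono by (metis L_def le0)
  ultimately show ?thesis
    by (simp add: lam_min_def lam_def L_def)
qed

lemma lam_max_eq:
  fixes A :: "real^'n^'n"
  assumes A: "transpose A = A" and b: "b \<in> eigvals A"
    and bound: "\<And>y. y \<bullet> (A *v y) \<le> b * (y \<bullet> y)"
  shows "lam_max A = b"
proof -
  define L where "L = eig_list A"
  define k where "k = CARD('n) - 1"
  have k: "k < length L" "Suc k = length L"
    using length_eig_list[OF A] by (simp_all add: k_def L_def)
  have "L ! k \<in> eigvals A"
    using set_eig_list[OF A] k nth_mem by (metis L_def)
  then obtain u where "u \<noteq> 0" "A *v u = L ! k *\<^sub>R u"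
    by (auto simp: eigvals_iff)
  then have "L ! k \<le> b"
    using bound[of u] by simp
  moreover obtain j where "j < length L" "L ! j = b"
    using b set_eig_list[OF A] by (metis L_def in_set_conv_nth)
  then have "b \<le> L ! k"
    using sorted_eig_list sorted_nth_mono k by (metis L_def less_Suc_eq_le)
  ultimately show ?thesis
    by (simp add: lam_max_def lam_def L_def k_def)
qed

lemma lam_min_le_lam2:
  fixes A :: "real^'n^'n"
  assumes "transpose A = A" "2 \<le> CARD('n)"
  shows "lam_min A \<le> lam A 2"
  using assms sorted_eig_list[of A] length_eig_list[OF assms(1)]
  by (simp add: lam_min_def lam_def sorted_nth_mono)

lemma sorted_nth_1_le:
  fixes L :: "'a::linorder list"
  assumes "sorted L" "2 \<le> length L" "m \<in> set L" "m \<noteq> L ! 0 \<or> 2 \<le> count (mset L) (L ! 0)"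
  shows "L ! 1 \<le> m"
proof -
  obtain a b r where L: "L = a # b # r"
    using assms(2) by (metis One_nat_def Suc_1 Suc_le_length_iff)
  have "\<forall>x\<in>set r. b \<le> x"
    using assms(1) unfolding L by auto
  moreover have "m = b \<or> m \<in> set r"
    using assms(3,4) unfolding L by (auto split: if_splits)
  ultimately show ?thesis
    using L by auto
qed

lemma lam2_le_eigenvalue:
  fixes A :: "real^'n^'n"
  assumes A: "transpose A = A" and n: "2 \<le> CARD('n)" and m: "m \<in> eigvals A"
    and simple: "m \<noteq> lam_min A \<or> 2 \<le> eig_mult A (lam_min A)"
  shows "lam A 2 \<le> m"
proof -
  define L where "L = eig_list A"
  have "L ! 0 \<in> eigvals A"
    using length_eig_list[OF A] set_eig_list[OF A] n nth_mem[of 0 L] by (simp add: L_def)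
  then have "m \<noteq> L ! 0 \<or> 2 \<le> count (mset L) (L ! 0)"
    using simple count_eig_list[OF A] by (simp add: L_def lam_min_def lam_def)
  then have "L ! 1 \<le> m"
    by (rule sorted_nth_1_le[rotated 3])
      (use n m in \<open>simp_all add: L_def sorted_eig_list length_eig_list[OF A] set_eig_list[OF A]\<close>)
  then show ?thesis
    by (simp add: lam_def L_def)
qed

section \<open>Bounds on quadratic forms\<close>

lemma UNIV_vec_ne_zero: "(UNIV :: (real^'n) set) \<noteq> {0}"
  by (metis UNIV_I axis_eq_0_iff singletonD zero_neq_one)

lemma lam_min_eigenvector:
  fixes A :: "real^'n^'n"
  assumes A: "transpose A = A"
  shows "\<exists>e. norm e = 1 \<and> A *v e = lam_min A *\<^sub>R e"
proof -
  obtain e a where e: "norm e = 1" "A *v e = a *\<^sub>R e" and bound: "\<forall>y. a * (y \<bullet> y) \<le> y \<bullet> (A *v y)"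
    using rayleigh_min_eigenvector[OF A subspace_UNIV UNIV_vec_ne_zero] by blast
  have "e \<noteq> 0"
    using e(1) by auto
  with e(2) have "a \<in> eigvals A"
    unfolding eigvals_iff by blast
  then have "lam_min A = a"
    using lam_min_eq[OF A] bound by blast
  with e show ?thesis
    by auto
qed

lemma quadratic_form_le_lam_max:
  fixes A :: "real^'n^'n"
  assumes A: "transpose A = A"
  shows "y \<bullet> (A *v y) \<le> lam_max A * (y \<bullet> y)"
proof -
  obtain f b where f: "norm f = 1" "A *v f = b *\<^sub>R f" and bound: "\<forall>y. y \<bullet> (A *v y) \<le> b * (y \<bullet> y)"
    using rayleigh_max_eigenvector[OF A subspace_UNIV UNIV_vec_ne_zero] by blast
  have "f \<noteq> 0"
    using f(1) by auto
  with f(2) have "b \<in> eigvals A"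
    unfolding eigvals_iff by blast
  then have "lam_max A = b"
    using lam_max_eq[OF A] bound by blast
  with bound show ?thesis
    by simp
qed

lemma quadratic_form_split_eigenvector:
  fixes A :: "real^'n^'n" and x :: "real^'n"
  assumes A: "transpose A = A" and e: "norm e = 1" and Ae: "A *v e = a *\<^sub>R e"
  defines "z \<equiv> x - (e \<bullet> x) *\<^sub>R e"
  shows "e \<bullet> z = 0" and "z \<bullet> z = x \<bullet> x - (e \<bullet> x)\<^sup>2"
    and "x \<bullet> (A *v x) = a * (e \<bullet> x)\<^sup>2 + z \<bullet> (A *v z)"
proof -
  have ee: "e \<bullet> e = 1"
    using e by (simp add: norm_eq_1)
  show ez: "e \<bullet> z = 0"
    by (simp add: z_def ee inner_diff_right)
  have x: "x = (e \<bullet> x) *\<^sub>R e + z"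
    by (simp add: z_def)
  have "x \<bullet> x = (e \<bullet> x)\<^sup>2 + z \<bullet> z"
    by (subst (1 2) x) (simp add: inner_add_left inner_add_right ee ez inner_commute power2_eq_square)
  then show "z \<bullet> z = x \<bullet> x - (e \<bullet> x)\<^sup>2"
    by simp
  have "e \<bullet> (A *v z) = 0"
    using symmetric_matrix_inner_commute[OF A, of e z] Ae ez by simp
  then show "x \<bullet> (A *v x) = a * (e \<bullet> x)\<^sup>2 + z \<bullet> (A *v z)"
    by (subst (1 2) x) (simp add: matrix_vector_right_distrib matrix_vector_mult_scaleR Ae
        inner_add_left inner_add_right ee ez inner_commute power2_eq_square)
qed

lemma quadratic_form_le_eigenvalue_lam_max:
  fixes A :: "real^'n^'n"
  assumes A: "transpose A = A" and e: "norm e = 1" and Ae: "A *v e = a *\<^sub>R e"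
  shows "x \<bullet> (A *v x) \<le> a * (e \<bullet> x)\<^sup>2 + lam_max A * (x \<bullet> x - (e \<bullet> x)\<^sup>2)"
  using quadratic_form_split_eigenvector[OF A e Ae, of x]
    quadratic_form_le_lam_max[OF A, of "x - (e \<bullet> x) *\<^sub>R e"]
  by simp

lemma orthogonal_complement_ne_zero:
  fixes e :: "real^'n"
  assumes "2 \<le> CARD('n)" and e: "norm e = 1"
  shows "{y. e \<bullet> y = 0} \<noteq> {0}"
proof
  assume W: "{y. e \<bullet> y = 0} = {0}"
  have "x \<in> span {e}" for x
  proof -
    have "e \<bullet> e = 1"
      using e by (simp add: norm_eq_1)
    then have "x - (e \<bullet> x) *\<^sub>R e \<in> {y. e \<bullet> y = 0}"
      by (simp add: inner_diff_right)
    then have "x = (e \<bullet> x) *\<^sub>R e"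
      unfolding W by simp
    then show ?thesis
      by (metis span_base span_scale singletonI)
  qed
  then have "dim (UNIV :: (real^'n) set) \<le> card {e}"
    by (intro dim_le_card) auto
  with assms show False
    by simp
qed

lemma quadratic_form_ge_lam2_orthogonal:
  fixes A :: "real^'n^'n"
  assumes A: "transpose A = A" and n: "2 \<le> CARD('n)"
    and e: "norm e = 1" and Ae: "A *v e = lam_min A *\<^sub>R e" and z: "e \<bullet> z = 0"
  shows "lam A 2 * (z \<bullet> z) \<le> z \<bullet> (A *v z)"
proof -
  define W where "W = {y. e \<bullet> y = 0}"
  have "subspace W"
    unfolding W_def by (simp add: subspace_def inner_add_right)
  moreover have "W \<noteq> {0}"
    unfolding W_def by (rule orthogonal_complement_ne_zero[OF n e])
  moreover have "A *v y \<in> W" if "y \<in> W" for y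
    using that symmetric_matrix_inner_commute[OF A, of e y] Ae by (simp add: W_def)
  ultimately have "\<exists>v m. v \<in> W \<and> norm v = 1 \<and> A *v v = m *\<^sub>R v \<and> (\<forall>y\<in>W. m * (y \<bullet> y) \<le> y \<bullet> (A *v y))"
    by (rule rayleigh_min_eigenvector[OF A])
  then obtain v m where v: "v \<in> W" "norm v = 1" "A *v v = m *\<^sub>R v"
    and bound: "\<forall>y\<in>W. m * (y \<bullet> y) \<le> y \<bullet> (A *v y)"
    by blast
  have "v \<noteq> 0"
    using v(2) by auto
  with v(3) have "m \<in> eigvals A"
    unfolding eigvals_iff by blast
  moreover have "m \<noteq> lam_min A \<or> 2 \<le> eig_mult A (lam_min A)"
  proof (cases "m = lam_min A")
    case True
    have "e \<noteq> v"
      using v(1) e by (auto simp: W_def norm_eq_1)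
    then have "card {e, v} = 2"
      by simp
    moreover have "card {e, v} \<le> eig_mult A (lam_min A)"
      using Ae v True e
      by (intro card_le_eig_mult) (auto simp: pairwise_def orthogonal_def W_def inner_commute)
    ultimately show ?thesis
      by simp
  qed simp
  ultimately have "lam A 2 \<le> m"
    by (rule lam2_le_eigenvalue[OF A n])
  have "m * (z \<bullet> z) \<le> z \<bullet> (A *v z)"
    using bound z by (simp add: W_def)
  moreover have "lam A 2 * (z \<bullet> z) \<le> m * (z \<bullet> z)"
    using \<open>lam A 2 \<le> m\<close> by (simp add: mult_right_mono)
  ultimately show ?thesis
    by simp
qed

lemma quadratic_form_ge_lam_min_lam2:
  fixes A :: "real^'n^'n"
  assumes A: "transpose A = A" and n: "2 \<le> CARD('n)"
    and e: "norm e = 1" and Ae: "A *v e = lam_min A *\<^sub>R e"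
  shows "lam_min A * (e \<bullet> x)\<^sup>2 + lam A 2 * (x \<bullet> x - (e \<bullet> x)\<^sup>2) \<le> x \<bullet> (A *v x)"
  using quadratic_form_split_eigenvector[OF A e Ae, of x]
    quadratic_form_ge_lam2_orthogonal[OF A n e Ae, of "x - (e \<bullet> x) *\<^sub>R e"]
  by simp

section \<open>Riesz matrices and cone subequations\<close>

definition riesz_matrix :: "real^'n \<Rightarrow> real \<Rightarrow> real^'n^'n" where
  "riesz_matrix u t = proj_perp u - (t - 1) *\<^sub>R proj_line u"

lemma riesz_set_eq: "riesz_set F e = {t. riesz_matrix e t \<in> F}"
  by (simp add: riesz_set_def riesz_matrix_def)

lemma riesz_matrix_mult_vec: "riesz_matrix u t *v x = x - (t * (u \<bullet> x)) *\<^sub>R u"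
proof -
  have "proj_line u *v x = (u \<bullet> x) *\<^sub>R u"
    by (simp add: proj_line_def matrix_vector_mult_def vec_eq_iff inner_vec_def sum_distrib_left mult_ac)
  then show ?thesis
    by (simp add: riesz_matrix_def proj_perp_def matrix_vector_mult_diff_rdistrib
        scaleR_matrix_vector_assoc[symmetric] algebra_simps)
qed

lemma transpose_riesz_matrix: "transpose (riesz_matrix u t) = riesz_matrix u t"
  by (simp add: riesz_matrix_def proj_perp_def proj_line_def transpose_def vec_eq_iff mat_def mult.commute)

lemma quadratic_form_riesz_matrix: "x \<bullet> (riesz_matrix u t *v x) = x \<bullet> x - t * (u \<bullet> x)\<^sup>2"
  by (simp add: riesz_matrix_mult_vec inner_diff_right power2_eq_square inner_commute)

lemma riesz_matrix_0: "riesz_matrix u 0 = mat 1"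
  by (simp add: matrix_eq riesz_matrix_mult_vec)

lemma orthogonal_conj_riesz_matrix:
  fixes g :: "real^'n^'n"
  assumes "g ** transpose g = mat 1"
  shows "g ** riesz_matrix u t ** transpose g = riesz_matrix (g *v u) t"
proof (subst matrix_eq, intro allI)
  fix x
  have "u \<bullet> (transpose g *v x) = (g *v u) \<bullet> x"
    by (metis dot_lmul_matrix transpose_matrix_vector transpose_transpose vector_transpose_matrix)
  then have "(g ** riesz_matrix u t ** transpose g) *v x
      = (g ** transpose g) *v x - (t * ((g *v u) \<bullet> x)) *\<^sub>R (g *v u)"
    by (simp add: matrix_vector_mul_assoc[symmetric] riesz_matrix_mult_vec
        matrix_vector_mult_diff_distrib matrix_vector_mult_scaleR)
  then show "(g ** riesz_matrix u t ** transpose g) *v x = riesz_matrix (g *v u) t *v x"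
    by (simp add: assms riesz_matrix_mult_vec)
qed

lemma cone_subequation_symmetric:
  assumes "cone_subequation F" "A \<in> F"
  shows "transpose A = A"
  using assms unfolding cone_subequation_def sym_mats_def by blast

lemma cone_subequation_scaleR:
  assumes "cone_subequation F" "A \<in> F" "0 \<le> t"
  shows "t *\<^sub>R A \<in> F"
  using assms unfolding cone_subequation_def by blast

lemma cone_subequation_mono:
  fixes A B :: "real^'n^'n"
  assumes F: "cone_subequation F" and A: "A \<in> F" and B: "transpose B = B"
    and le: "\<And>x. x \<bullet> (A *v x) \<le> x \<bullet> (B *v x)"
  shows "B \<in> F"
proof -
  have "transpose (B - A) = B - A"
    using cone_subequation_symmetric[OF F A] B by (simp add: transpose_def vec_eq_iff)
  then have "psd (B - A)"
    using le by (simp add: psd_def matrix_vector_mult_diff_rdistrib inner_diff_right)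
  then have "A + (B - A) \<in> F"
    using F A unfolding cone_subequation_def by blast
  then show ?thesis
    by simp
qed

lemma cone_subequation_mat_1:
  fixes F :: "(real^'n^'n) set"
  assumes F: "cone_subequation F"
  shows "mat 1 \<in> F"
proof -
  obtain A where A: "A \<in> F"
    using F unfolding cone_subequation_def by blast
  define c where "c = max (lam_max A) 1"
  have "c *\<^sub>R mat 1 \<in> F"
  proof (rule cone_subequation_mono[OF F A])
    show "transpose (c *\<^sub>R mat 1) = (c *\<^sub>R mat 1 :: real^'n^'n)"
      by (simp add: transpose_scalar)
    fix x :: "real^'n"
    have "x \<bullet> (A *v x) \<le> lam_max A * (x \<bullet> x)"
      by (rule quadratic_form_le_lam_max[OF cone_subequation_symmetric[OF F A]])
    also have "\<dots> \<le> c * (x \<bullet> x)"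
      by (simp add: c_def mult_right_mono)
    finally show "x \<bullet> (A *v x) \<le> x \<bullet> ((c *\<^sub>R mat 1) *v x)"
      by (simp add: scaleR_matrix_vector_assoc[symmetric])
  qed
  moreover have "0 < c"
    by (simp add: c_def)
  ultimately show ?thesis
    using cone_subequation_scaleR[OF F, of "c *\<^sub>R mat 1" "1 / c"] by simp
qed

lemma riesz_matrix_transfer:
  assumes G: "transitive_orth_subgroup G" and inv: "invariant_under G F"
    and u: "norm u = 1" and w: "norm w = 1" and Q: "riesz_matrix u t \<in> F"
  shows "riesz_matrix w t \<in> F"
proof -
  obtain g where g: "g \<in> G" "g *v u = w"
    using G u w unfolding transitive_orth_subgroup_def by blast
  have "g ** transpose g = mat 1"
    using g G unfolding transitive_orth_subgroup_def orthogonal_group_def orthogonal_matrix_def by blast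
  then have "g ** riesz_matrix u t ** transpose g = riesz_matrix w t"
    by (simp add: orthogonal_conj_riesz_matrix g(2))
  moreover have "g ** riesz_matrix u t ** transpose g \<in> F"
    using inv g(1) Q unfolding invariant_under_def by blast
  ultimately show ?thesis
    by simp
qed

lemma Sup_riesz_set_mem:
  assumes F: "cone_subequation F" and bdd: "bdd_above (riesz_set F e)"
  shows "Sup (riesz_set F e) \<in> riesz_set F e"
proof (rule closed_contains_Sup[OF _ bdd])
  have "0 \<in> riesz_set F e"
    using cone_subequation_mat_1[OF F] by (simp add: riesz_set_eq riesz_matrix_0)
  then show "riesz_set F e \<noteq> {}"
    by blast
  have "continuous_on UNIV (riesz_matrix e)"
    unfolding riesz_matrix_def by (intro continuous_intros)
  moreover have "closed F"
    using F by (simp add: cone_subequation_def)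
  ultimately show "closed (riesz_set F e)"
    unfolding riesz_set_eq by (metis closed_vimage vimage_def)
qed

section \<open>The two inclusions\<close>

lemma unit_inner_square_le:
  fixes e x :: "'a::real_inner"
  assumes "norm e = 1"
  shows "(e \<bullet> x)\<^sup>2 \<le> x \<bullet> x"
  using Cauchy_Schwarz_ineq[of e x] assms by (simp add: norm_eq_1)

lemma mem_if_above_scaled_riesz_matrix:
  fixes A :: "real^'n^'n"
  assumes F: "cone_subequation F" and Q: "riesz_matrix e t \<in> F" and A: "transpose A = A"
    and e: "norm e = 1"
    and lower: "\<And>x. a * (e \<bullet> x)\<^sup>2 + b * (x \<bullet> x - (e \<bullet> x)\<^sup>2) \<le> x \<bullet> (A *v x)"
    and b: "0 \<le> b" "(1 - t) * b \<le> a"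
  shows "A \<in> F"
proof (rule cone_subequation_mono[OF F cone_subequation_scaleR[OF F Q b(1)] A])
  fix x :: "real^'n"
  define c s where "c = (e \<bullet> x)\<^sup>2" and "s = x \<bullet> x - (e \<bullet> x)\<^sup>2"
  have "0 \<le> c"
    by (simp add: c_def)
  have "x \<bullet> ((b *\<^sub>R riesz_matrix e t) *v x) = ((1 - t) * b) * c + b * s"
    by (simp add: scaleR_matrix_vector_assoc[symmetric] quadratic_form_riesz_matrix c_def s_def
        algebra_simps)
  also have "\<dots> \<le> a * c + b * s"
    using mult_right_mono[OF b(2) \<open>0 \<le> c\<close>] by simp
  also have "\<dots> \<le> x \<bullet> (A *v x)"
    using lower[of x] by (simp add: c_def s_def)
  finally show "x \<bullet> ((b *\<^sub>R riesz_matrix e t) *v x) \<le> x \<bullet> (A *v x)" .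
qed

lemma F_min_2_subset:
  fixes F :: "(real^'n^'n) set"
  assumes n: "2 \<le> CARD('n)" and F: "cone_subequation F" and p: "0 < p"
    and riesz: "\<And>u. norm u = 1 \<Longrightarrow> riesz_matrix u p \<in> F"
  shows "F_min_2 p \<subseteq> F"
proof
  fix A :: "real^'n^'n"
  assume "A \<in> F_min_2 p"
  then have A: "transpose A = A" and hyp: "0 \<le> lam_min A + (p - 1) * lam A 2"
    by (auto simp: F_min_2_def sym_mats_def)
  obtain e where e: "norm e = 1" "A *v e = lam_min A *\<^sub>R e"
    using lam_min_eigenvector[OF A] by blast
  have "lam_min A \<le> lam A 2"
    by (rule lam_min_le_lam2[OF A n])
  moreover have "p * lam A 2 = lam A 2 + (p - 1) * lam A 2"
    by (simp add: algebra_simps)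
  ultimately have "0 \<le> p * lam A 2"
    using hyp by linarith
  with p have "0 \<le> lam A 2"
    by (simp add: zero_le_mult_iff)
  moreover have "(1 - p) * lam A 2 \<le> lam_min A"
    using hyp by (simp add: algebra_simps)
  ultimately show "A \<in> F"
    using mem_if_above_scaled_riesz_matrix[OF F riesz[OF e(1)] A e(1)
        quadratic_form_ge_lam_min_lam2[OF A n e]] by blast
qed

lemma riesz_matrix_mem_if_above_scaled:
  fixes A :: "real^'n^'n"
  assumes F: "cone_subequation F" and A: "A \<in> F" and e: "norm e = 1"
    and upper: "\<And>x. x \<bullet> (A *v x) \<le> a * (e \<bullet> x)\<^sup>2 + b * (x \<bullet> x - (e \<bullet> x)\<^sup>2)"
    and k: "0 \<le> k" "k * b \<le> 1" "k * a \<le> 1 - t"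
  shows "riesz_matrix e t \<in> F"
proof (rule cone_subequation_mono[OF F cone_subequation_scaleR[OF F A k(1)] transpose_riesz_matrix])
  fix x :: "real^'n"
  define c s where "c = (e \<bullet> x)\<^sup>2" and "s = x \<bullet> x - (e \<bullet> x)\<^sup>2"
  have "0 \<le> c" "0 \<le> s"
    using unit_inner_square_le[OF e] by (simp_all add: c_def s_def)
  have "x \<bullet> ((k *\<^sub>R A) *v x) = k * (x \<bullet> (A *v x))"
    by (simp add: scaleR_matrix_vector_assoc[symmetric])
  also have "\<dots> \<le> (k * a) * c + (k * b) * s"
    using mult_left_mono[OF upper[of x] k(1)] by (simp add: c_def s_def algebra_simps)
  also have "\<dots> \<le> (1 - t) * c + s"
    using mult_right_mono[OF k(3) \<open>0 \<le> c\<close>] mult_right_mono[OF k(2) \<open>0 \<le> s\<close>] by simp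
  also have "\<dots> = x \<bullet> (riesz_matrix e t *v x)"
    by (simp add: quadratic_form_riesz_matrix c_def s_def algebra_simps)
  finally show "x \<bullet> ((k *\<^sub>R A) *v x) \<le> x \<bullet> (riesz_matrix e t *v x)" .
qed

lemma subset_F_min_max:
  fixes F :: "(real^'n^'n) set"
  assumes F: "cone_subequation F" and p: "0 < p"
    and riesz: "\<And>u t. norm u = 1 \<Longrightarrow> riesz_matrix u t \<in> F \<Longrightarrow> t \<le> p"
  shows "F \<subseteq> F_min_max p"
proof
  fix A :: "real^'n^'n"
  assume AF: "A \<in> F"
  have A: "transpose A = A"
    by (rule cone_subequation_symmetric[OF F AF])
  obtain e where e: "norm e = 1" "A *v e = lam_min A *\<^sub>R e"
    using lam_min_eigenvector[OF A] by blast
  define a b where "a = lam_min A" and "b = lam_max A"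
  note mem = riesz_matrix_mem_if_above_scaled[OF F AF e(1)
      quadratic_form_le_eigenvalue_lam_max[OF A e, folded a_def b_def]]
  have "a \<le> b"
    using quadratic_form_le_lam_max[OF A, of e] e by (simp add: a_def b_def norm_eq_1)
  have "0 \<le> a + (p - 1) * b"
  proof (cases "0 < b")
    case True
    then have "riesz_matrix e (1 - a / b) \<in> F"
      by (intro mem[of "1 / b"]) simp_all
    then have "1 - a / b \<le> p"
      using riesz e(1) by blast
    then show ?thesis
      using True by (simp add: field_simps)
  next
    case False
    show ?thesis
    proof (rule ccontr)
      assume neg: "\<not> ?thesis"
      have "a < 0"
      proof (rule ccontr)
        assume "\<not> a < 0"
        then have "a = 0" "b = 0"
          using False \<open>a \<le> b\<close> by linarith+
        with neg show False
          by simp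
      qed
      moreover have "b * p \<le> 0"
        using False p by (simp add: mult_nonpos_nonneg)
      ultimately have "riesz_matrix e (p + 1) \<in> F"
        using False p by (intro mem[of "(p + 1) / - a"]) (simp_all add: field_simps)
      then show False
        using riesz e(1) by fastforce
    qed
  qed
  then show "A \<in> F_min_max p"
    using A by (simp add: F_min_max_def sym_mats_def a_def b_def)
qed

theorem lemmaA1:
  fixes F G :: "(real ^ 'n ^ 'n) set" and e :: "real ^ 'n" and p :: real
  assumes "CARD('n) \<ge> 2"
    and "cone_subequation F"
    and "transitive_orth_subgroup G"
    and "invariant_under G F"
    and "norm e = 1"
    and "bdd_above (riesz_set F e)"
    and "p = Sup (riesz_set F e)"
    and "1 \<le> p"
  shows "F_min_2 p \<subseteq> F \<and> F \<subseteq> F_min_max p"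
proof -
  note n = assms(1) and F = assms(2) and transfer = riesz_matrix_transfer[OF assms(3,4)]
    and e = assms(5) and bdd = assms(6) and p = assms(7)
  have "riesz_matrix u p \<in> F" if "norm u = 1" for u
    using transfer[OF e that] Sup_riesz_set_mem[OF F bdd] by (simp add: riesz_set_eq p)
  moreover have "t \<le> p" if "norm u = 1" "riesz_matrix u t \<in> F" for u t
    using transfer[OF that(1) e that(2)] cSup_upper[OF _ bdd] by (simp add: riesz_set_eq p)
  moreover have "0 < p"
    using assms(8) by simp
  ultimately show ?thesis
    using F_min_2_subset[OF n F] subset_F_min_max[OF F] by blast
qed

end
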